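(* Let $G\in\mathfrak D_4$ and suppose $G$ contains nine distinct vertices $a_i,b_i,c_i$ ($i\in\mathbb Z/3\mathbb Z$) such that $a_ic_i,\ b_ic_i\in E(G)$ for all $i$ and $a_ib_j\in E(G)$ for all $i\ne j$ (i.e. a subgraph isomorphic to the graph $N$ with these edges). Then for every $i\in\mathbb Z/3\mathbb Z$, either $c_{i-1}c_{i+1}\in E(G)$, or there is a vertex of $G$ adjacent to all of $a_i,b_i,c_{i-1},c_{i+1}$.
   Context: $\mathfrak D_4$ is the class of (finite) maximal triangle-free graphs satisfying property $\mathscr{D}_4$. Maximal triangle-free: no triangle, and adding any new edge creates a triangle. Property $\mathscr{D}_k$: for every $m\in\{1,\dots,k\}$ and every sequence $x_1,\dots,x_{3m}$ of (not necessarily distinct) vertices there is a vertex $y$ with $|\{i\in[3m]: x_iy\in E(G)\}|\ge m+1$. *)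

theory Defs
  imports Main
begin

definition simple_graph :: "'a set \<Rightarrow> ('a \<Rightarrow> 'a \<Rightarrow> bool) \<Rightarrow> bool" where
  "simple_graph V E \<longleftrightarrow> finite V \<and> (\<forall>x y. E x y \<longrightarrow> x \<in> V \<and> y \<in> V)
     \<and> (\<forall>x y. E x y \<longrightarrow> E y x) \<and> (\<forall>x. \<not> E x x)"

definition triangle_free :: "'a set \<Rightarrow> ('a \<Rightarrow> 'a \<Rightarrow> bool) \<Rightarrow> bool" where
  "triangle_free V E \<longleftrightarrow> \<not> (\<exists>x\<in>V. \<exists>y\<in>V. \<exists>z\<in>V. E x y \<and> E y z \<and> E x z)"

text \<open>Maximal triangle-free: triangle-free, and adding any non-edge between two distinct
  vertices creates a triangle, i.e. the two vertices have a common neighbour.\<close>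
definition maximal_triangle_free :: "'a set \<Rightarrow> ('a \<Rightarrow> 'a \<Rightarrow> bool) \<Rightarrow> bool" where
  "maximal_triangle_free V E \<longleftrightarrow> simple_graph V E \<and> triangle_free V E \<and>
     (\<forall>x\<in>V. \<forall>y\<in>V. x \<noteq> y \<and> \<not> E x y \<longrightarrow> (\<exists>z\<in>V. E x z \<and> E z y))"

definition prop_D :: "nat \<Rightarrow> 'a set \<Rightarrow> ('a \<Rightarrow> 'a \<Rightarrow> bool) \<Rightarrow> bool" where
  "prop_D k V E \<longleftrightarrow> (\<forall>m\<in>{1..k}. \<forall>x::nat \<Rightarrow> 'a. (\<forall>i<3*m. x i \<in> V) \<longrightarrow>
     (\<exists>y\<in>V. card {i. i < 3*m \<and> E (x i) y} \<ge> m + 1))"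

definition in_D4 :: "'a set \<Rightarrow> ('a \<Rightarrow> 'a \<Rightarrow> bool) \<Rightarrow> bool" where
  "in_D4 V E \<longleftrightarrow> maximal_triangle_free V E \<and> prop_D 4 V E"

end

theory Submission
  imports Defs
begin

text \<open>
  Call a common neighbour of \<open>a\<^sub>i, b\<^sub>i, c\<^sub>i\<^sub>-\<^sub>1, c\<^sub>i\<^sub>+\<^sub>1\<close> a hub at \<open>i\<close>, and suppose that at
  \<open>i = 0\<close> there is neither a hub nor the edge \<open>c\<^sub>1c\<^sub>2\<close>. Since the graph is triangle-free, every
  neighbourhood is independent; so whenever property \<open>\<D>\<^sub>m\<close> yields a vertex with \<open>m + 1\<close> neighbours
  among \<open>3m\<close> chosen vertices, these neighbours form one of the few independent sets of that size.
  On the nine vertices of \<open>N\<close> this gives a hub at 1 or at 2. Adding the common neighbours of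
  \<open>c\<^sub>1, c\<^sub>2\<close> and of \<open>c\<^sub>0, c\<^sub>1\<close> provided by maximality, and the vertices found so far, a short
  tree of further applications of \<open>\<D>\<^sub>2\<close>, \<open>\<D>\<^sub>3\<close> and \<open>\<D>\<^sub>4\<close> rules out the edges \<open>c\<^sub>0c\<^sub>1\<close>, \<open>c\<^sub>0c\<^sub>2\<close>
  and hubs at 1 and 2: every branch ends with twelve vertices
  of which no vertex can see five.
  The symmetries of \<open>N\<close> exchanging \<open>a\<close> with \<open>b\<close>, or the indices 1 with 2, halve the case analysis.
\<close>

lemma in_D4_sym: "in_D4 V E \<Longrightarrow> E x y \<Longrightarrow> E y x"
  unfolding in_D4_def maximal_triangle_free_def simple_graph_def by blast

lemma in_D4_in_V: "in_D4 V E \<Longrightarrow> E x y \<Longrightarrow> y \<in> V"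
  unfolding in_D4_def maximal_triangle_free_def simple_graph_def by blast

lemma in_D4_no_common_neighbour: "in_D4 V E \<Longrightarrow> E u v \<Longrightarrow> \<not> (E u w \<and> E v w)"
  unfolding in_D4_def maximal_triangle_free_def simple_graph_def triangle_free_def by blast

lemma in_D4_common_neighbour:
  assumes "in_D4 V E" "x \<in> V" "y \<in> V" "x \<noteq> y" "\<not> E x y"
  obtains z where "E x z" "E y z"
  using assms unfolding in_D4_def maximal_triangle_free_def simple_graph_def by blast

definition adj_count :: "('a \<Rightarrow> 'a \<Rightarrow> bool) \<Rightarrow> 'a list \<Rightarrow> 'a \<Rightarrow> int" where
  "adj_count E xs y = (\<Sum>x\<leftarrow>xs. of_bool (E x y))"

lemma adj_count_eq_length_filter: "adj_count E xs y = int (length (filter (\<lambda>x. E x y) xs))"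
  by (induction xs) (auto simp: adj_count_def)

lemma in_D4_dense_neighbour:
  assumes "in_D4 V E" "set xs \<subseteq> V" "length xs = 3 * m" "m \<in> {1..4}"
  shows "\<exists>y\<in>V. int m < adj_count E xs y"
proof -
  have "prop_D 4 V E" using assms(1) by (simp add: in_D4_def)
  moreover have "\<forall>i<3 * m. xs ! i \<in> V" using assms(2,3) by auto
  ultimately obtain y where "y \<in> V" "m + 1 \<le> card {i. i < length xs \<and> E (xs ! i) y}"
    using assms(3,4) unfolding prop_D_def by fastforce
  then have "int m < adj_count E xs y"
    by (simp add: adj_count_eq_length_filter length_filter_conv_card)
  with \<open>y \<in> V\<close> show ?thesis by blast
qed

lemma inj_on_of_card_Un_image:
  assumes "card (f ` {0..<n} \<union> g ` {0..<n} \<union> h ` {0..<n}) = 3 * n"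
  shows "inj_on h {0..<n}"
proof -
  let ?A = "{0..<n}"
  have "card (f ` ?A \<union> g ` ?A \<union> h ` ?A) \<le> card (f ` ?A \<union> g ` ?A) + card (h ` ?A)"
    by (rule card_Un_le)
  moreover have "card (f ` ?A \<union> g ` ?A) \<le> card (f ` ?A) + card (g ` ?A)"
    by (rule card_Un_le)
  moreover have "card (f ` ?A) \<le> n" "card (g ` ?A) \<le> n" "card (h ` ?A) \<le> n"
    using card_image_le[of ?A] by auto
  ultimately have "card (h ` ?A) = card ?A"
    using assms by simp
  then show ?thesis by (simp add: inj_on_iff_eq_card)
qed

locale N_counterexample =
  fixes V :: "'a set" and E :: "'a \<Rightarrow> 'a \<Rightarrow> bool" and a0 a1 a2 b0 b1 b2 c0 c1 c2 :: 'a
  assumes D4: "in_D4 V E"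
    and vertices: "a0 \<in> V" "a1 \<in> V" "a2 \<in> V" "b0 \<in> V" "b1 \<in> V" "b2 \<in> V" "c0 \<in> V" "c1 \<in> V" "c2 \<in> V"
    and N_edges: "E a0 c0" "E b0 c0" "E a1 c1" "E b1 c1" "E a2 c2" "E b2 c2"
      "E a0 b1" "E a0 b2" "E a1 b0" "E a1 b2" "E a2 b0" "E a2 b1"
    and c_distinct: "c0 \<noteq> c1" "c0 \<noteq> c2" "c1 \<noteq> c2"
    and no_edge_c1_c2: "\<not> E c1 c2"
    and no_hub: "\<not> (E a0 w \<and> E b0 w \<and> E c1 w \<and> E c2 w)"
begin

lemma swap_ab: "N_counterexample V E b0 b1 b2 a0 a1 a2 c0 c1 c2"
  using D4 vertices N_edges N_edges[THEN in_D4_sym[OF D4]] c_distinct no_edge_c1_c2 no_hub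
  by unfold_locales auto

lemma swap_12: "N_counterexample V E a0 a2 a1 b0 b2 b1 c0 c2 c1"
  using D4 vertices N_edges N_edges[THEN in_D4_sym[OF D4]] c_distinct no_edge_c1_c2 no_hub
    in_D4_sym[OF D4, of c2 c1]
  by unfold_locales auto

lemmas in_V = in_D4_in_V[OF D4]
lemmas no_common_neighbour = in_D4_no_common_neighbour[OF D4]

lemma dense_neighbour:
  "set xs \<subseteq> V \<Longrightarrow> length xs = 3 * m \<Longrightarrow> m \<in> {1..4} \<Longrightarrow> \<exists>y\<in>V. int m < adj_count E xs y"
  by (rule in_D4_dense_neighbour[OF D4])

lemma hub_at_1_or_2:
  obtains y where "E a1 y" "E b1 y" "E c0 y" "E c2 y"
    | y where "E a2 y" "E b2 y" "E c0 y" "E c1 y"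
proof -
  obtain y where "3 < adj_count E [a0, a1, a2, b0, b1, b2, c0, c1, c2] y"
    using dense_neighbour[of "[a0, a1, a2, b0, b1, b2, c0, c1, c2]" 3] vertices by auto
  then have "E a1 y \<and> E b1 y \<and> E c0 y \<and> E c2 y \<or> E a2 y \<and> E b2 y \<and> E c0 y \<and> E c1 y"
    using N_edges[THEN no_common_neighbour, of y] no_hub[of y]
    by (auto simp: adj_count_def of_bool_def split: if_splits)
  with that show thesis by blast
qed

lemma common_neighbour_a012_or_b012:
  assumes d: "E c1 d" "E c2 d"
  obtains z where "E a0 z" "E a1 z" "E a2 z" "E d z"
    | z where "E b0 z" "E b1 z" "E b2 z" "E d z"
proof -
  obtain z where "3 < adj_count E [a0, a1, a2, b0, b1, b2, c1, c2, d] z"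
    using dense_neighbour[of "[a0, a1, a2, b0, b1, b2, c1, c2, d]" 3] vertices in_V[OF d(1)] by auto
  then have "E a0 z \<and> E a1 z \<and> E a2 z \<and> E d z \<or> E b0 z \<and> E b1 z \<and> E b2 z \<and> E d z"
    using N_edges[THEN no_common_neighbour, of z] d[THEN no_common_neighbour, of z] no_hub[of z]
    by (auto simp: adj_count_def of_bool_def split: if_splits)
  with that show thesis by blast
qed

lemma no_common_neighbour_a012_d_of_edge_c0_c1:
  assumes c0_c1: "E c0 c1"
    and y: "E a1 y" "E b1 y" "E c0 y" "E c2 y"
    and d: "E c1 d" "E c2 d"
  shows "\<not> (E a0 z \<and> E a1 z \<and> E a2 z \<and> E d z)"
proof
  assume "E a0 z \<and> E a1 z \<and> E a2 z \<and> E d z"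
  then have z: "E a0 z" "E a1 z" "E a2 z" "E d z" by blast+
  have V: "y \<in> V" "d \<in> V" "z \<in> V" using y(1) d(1) z(1) by (auto intro: in_V)
  note known = N_edges c0_c1 y d z
  obtain u where "u \<in> V" "3 < adj_count E [a0, a2, b0, b1, b2, c0, c1, c2, d] u"
    using dense_neighbour[of "[a0, a2, b0, b1, b2, c0, c1, c2, d]" 3] vertices V by auto
  then have "E a2 u \<and> E b2 u \<and> E c0 u \<and> E d u \<or> E b0 u \<and> E b1 u \<and> E b2 u \<and> E d u
      \<or> E b1 u \<and> E b2 u \<and> E c0 u \<and> E d u"
    using known[THEN no_common_neighbour, of u] no_hub[of u]
    by (auto simp: adj_count_def of_bool_def split: if_splits)
  then show False
  proof (elim disjE conjE)
    assume u: "E a2 u" "E b2 u" "E c0 u" "E d u"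
    obtain w where "4 < adj_count E [a0, a1, a2, b1, b2, c0, c1, c2, d, y, z, u] w"
      using dense_neighbour[of "[a0, a1, a2, b1, b2, c0, c1, c2, d, y, z, u]" 4] vertices V
        \<open>u \<in> V\<close> by auto
    then show False
      using known[THEN no_common_neighbour, of w] u[THEN no_common_neighbour, of w] no_hub[of w]
      by (auto simp: adj_count_def of_bool_def split: if_splits)
  next
    assume u: "E b0 u" "E b1 u" "E b2 u" "E d u"
    obtain w where "4 < adj_count E [a0, a1, a2, b0, b1, b2, c0, c1, c2, d, z, u] w"
      using dense_neighbour[of "[a0, a1, a2, b0, b1, b2, c0, c1, c2, d, z, u]" 4] vertices V
        \<open>u \<in> V\<close> by auto
    then show False
      using known[THEN no_common_neighbour, of w] u[THEN no_common_neighbour, of w] no_hub[of w]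
      by (auto simp: adj_count_def of_bool_def split: if_splits)
  next
    assume u: "E b1 u" "E b2 u" "E c0 u" "E d u"
    obtain w where "4 < adj_count E [a0, a1, a2, b0, b1, b2, c0, c2, d, y, z, u] w"
      using dense_neighbour[of "[a0, a1, a2, b0, b1, b2, c0, c2, d, y, z, u]" 4] vertices V
        \<open>u \<in> V\<close> by auto
    then show False
      using known[THEN no_common_neighbour, of w] u[THEN no_common_neighbour, of w] no_hub[of w]
      by (auto simp: adj_count_def of_bool_def split: if_splits)
  qed
qed

lemma no_edge_c0_c1: "\<not> E c0 c1"
proof
  assume c0_c1: "E c0 c1"
  obtain y where y: "E a1 y" "E b1 y" "E c0 y" "E c2 y"
  proof (rule hub_at_1_or_2)
    fix y assume "E c0 y" "E c1 y"
    with c0_c1 show thesis using no_common_neighbour by blast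
  qed
  obtain d where d: "E c1 d" "E c2 d"
    by (rule in_D4_common_neighbour[OF D4 vertices(8,9) c_distinct(3) no_edge_c1_c2])
  show False
  proof (rule common_neighbour_a012_or_b012[OF d])
    fix z assume "E a0 z" "E a1 z" "E a2 z" "E d z"
    with no_common_neighbour_a012_d_of_edge_c0_c1[OF c0_c1 y d] show False by blast
  next
    fix z assume "E b0 z" "E b1 z" "E b2 z" "E d z"
    with N_counterexample.no_common_neighbour_a012_d_of_edge_c0_c1[OF swap_ab c0_c1 y(2,1,3,4) d]
    show False by blast
  qed
qed

lemma no_common_neighbour_a012_f:
  assumes y: "E a1 y" "E b1 y" "E c0 y" "E c2 y"
    and d: "E c1 d" "E c2 d" and f: "E c0 f" "E c1 f"
    and z: "E a0 z" "E a1 z" "E a2 z" "E d z"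
  shows "\<not> (E a0 u \<and> E a1 u \<and> E a2 u \<and> E f u)"
proof
  assume "E a0 u \<and> E a1 u \<and> E a2 u \<and> E f u"
  then have u: "E a0 u" "E a1 u" "E a2 u" "E f u" by blast+
  have V: "y \<in> V" "d \<in> V" "f \<in> V" "z \<in> V" "u \<in> V"
    using y(1) d(1) f(1) z(1) u(1) by (auto intro: in_V)
  note known = N_edges y d f z u
  obtain v where "v \<in> V" "2 < adj_count E [a0, a2, b0, b2, c0, c2] v"
    using dense_neighbour[of "[a0, a2, b0, b2, c0, c2]" 2] vertices by auto
  then have "E a0 v \<and> E b0 v \<and> E c2 v \<or> E a2 v \<and> E b2 v \<and> E c0 v"
    using N_edges[THEN no_common_neighbour, of v]
    by (auto simp: adj_count_def of_bool_def split: if_splits)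
  then show False
  proof (elim disjE conjE)
    assume v: "E a0 v" "E b0 v" "E c2 v"
    obtain w where "4 < adj_count E [a0, a1, a2, b0, b1, c0, c1, c2, f, y, u, v] w"
      using dense_neighbour[of "[a0, a1, a2, b0, b1, c0, c1, c2, f, y, u, v]" 4] vertices V
        \<open>v \<in> V\<close> by auto
    then show False
      using known[THEN no_common_neighbour, of w] v[THEN no_common_neighbour, of w] no_hub[of w]
      by (auto simp: adj_count_def of_bool_def split: if_splits)
  next
    assume v: "E a2 v" "E b2 v" "E c0 v"
    obtain w where "4 < adj_count E [a0, a1, a2, b1, b2, c0, c1, c2, d, y, z, v] w"
      using dense_neighbour[of "[a0, a1, a2, b1, b2, c0, c1, c2, d, y, z, v]" 4] vertices V
        \<open>v \<in> V\<close> by auto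
    then show False
      using known[THEN no_common_neighbour, of w] v[THEN no_common_neighbour, of w] no_hub[of w]
      by (auto simp: adj_count_def of_bool_def split: if_splits)
  qed
qed

lemma no_common_neighbour_a012_d_of_hub_at_1:
  assumes y: "E a1 y" "E b1 y" "E c0 y" "E c2 y"
    and d: "E c1 d" "E c2 d" and f: "E c0 f" "E c1 f"
  shows "\<not> (E a0 z \<and> E a1 z \<and> E a2 z \<and> E d z)"
proof
  assume "E a0 z \<and> E a1 z \<and> E a2 z \<and> E d z"
  then have z: "E a0 z" "E a1 z" "E a2 z" "E d z" by blast+
  have V: "y \<in> V" "d \<in> V" "f \<in> V" "z \<in> V"
    using y(1) d(1) f(1) z(1) by (auto intro: in_V)
  note known = N_edges y d f z
  obtain u where "u \<in> V" "3 < adj_count E [a0, a1, a2, b0, b1, c0, c1, f, z] u"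
    using dense_neighbour[of "[a0, a1, a2, b0, b1, c0, c1, f, z]" 3] vertices V by auto
  then have "E a0 u \<and> E a1 u \<and> E a2 u \<and> E f u \<or> E b0 u \<and> E b1 u \<and> E f u \<and> E z u"
    using known[THEN no_common_neighbour, of u] no_hub[of u]
    by (auto simp: adj_count_def of_bool_def split: if_splits)
  then show False
  proof (elim disjE conjE)
    assume "E a0 u" "E a1 u" "E a2 u" "E f u"
    with no_common_neighbour_a012_f[OF y d f z] show False by blast
  next
    assume u: "E b0 u" "E b1 u" "E f u" "E z u"
    obtain w where "4 < adj_count E [a0, a1, b1, b2, c0, c1, c2, d, f, y, z, u] w"
      using dense_neighbour[of "[a0, a1, b1, b2, c0, c1, c2, d, f, y, z, u]" 4] vertices V
        \<open>u \<in> V\<close> by auto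
    then show False
      using known[THEN no_common_neighbour, of w] u[THEN no_common_neighbour, of w] no_hub[of w]
      by (auto simp: adj_count_def of_bool_def split: if_splits)
  qed
qed

lemma no_hub_at_1: "\<not> (E a1 y \<and> E b1 y \<and> E c0 y \<and> E c2 y)"
proof
  assume "E a1 y \<and> E b1 y \<and> E c0 y \<and> E c2 y"
  then have y: "E a1 y" "E b1 y" "E c0 y" "E c2 y" by blast+
  obtain d where d: "E c1 d" "E c2 d"
    by (rule in_D4_common_neighbour[OF D4 vertices(8,9) c_distinct(3) no_edge_c1_c2])
  obtain f where f: "E c0 f" "E c1 f"
    by (rule in_D4_common_neighbour[OF D4 vertices(7,8) c_distinct(1) no_edge_c0_c1])
  show False
  proof (rule common_neighbour_a012_or_b012[OF d])
    fix z assume "E a0 z" "E a1 z" "E a2 z" "E d z"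
    with no_common_neighbour_a012_d_of_hub_at_1[OF y d f] show False by blast
  next
    fix z assume "E b0 z" "E b1 z" "E b2 z" "E d z"
    with N_counterexample.no_common_neighbour_a012_d_of_hub_at_1[OF swap_ab y(2,1,3,4) d f]
    show False by blast
  qed
qed

theorem contradiction: False
proof (rule hub_at_1_or_2)
  fix y assume "E a1 y" "E b1 y" "E c0 y" "E c2 y"
  with no_hub_at_1 show False by blast
next
  fix y assume "E a2 y" "E b2 y" "E c0 y" "E c1 y"
  with N_counterexample.no_hub_at_1[OF swap_12] show False by blast
qed

end

lemma rotation_indices:
  assumes "i < (3::nat)"
  shows "(i + 1) mod 3 < 3" "(i + 2) mod 3 < 3"
    "i \<noteq> (i + 1) mod 3" "i \<noteq> (i + 2) mod 3" "(i + 1) mod 3 \<noteq> (i + 2) mod 3"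
proof -
  have "i = 0 \<or> i = 1 \<or> i = 2" using assms by auto
  then show "(i + 1) mod 3 < 3" "(i + 2) mod 3 < 3"
    "i \<noteq> (i + 1) mod 3" "i \<noteq> (i + 2) mod 3" "(i + 1) mod 3 \<noteq> (i + 2) mod 3"
    by auto
qed

theorem mainTheorem12:
  fixes V :: "'a set" and E :: "'a \<Rightarrow> 'a \<Rightarrow> bool"
    and a b c :: "nat \<Rightarrow> 'a"
  assumes G: "in_D4 V E"
    and inV: "\<forall>i<3. a i \<in> V \<and> b i \<in> V \<and> c i \<in> V"
    and dist: "card (a ` {0..<3} \<union> b ` {0..<3} \<union> c ` {0..<3}) = 9"
    and ac: "\<forall>i<3. E (a i) (c i) \<and> E (b i) (c i)"
    and ab: "\<forall>i<3. \<forall>j<3. i \<noteq> j \<longrightarrow> E (a i) (b j)"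
    and i: "i < 3"
  shows "E (c ((i + 2) mod 3)) (c ((i + 1) mod 3)) \<or>
         (\<exists>y\<in>V. E y (a i) \<and> E y (b i) \<and> E y (c ((i + 2) mod 3)) \<and> E y (c ((i + 1) mod 3)))"
proof (rule ccontr)
  let ?j = "(i + 1) mod 3" and ?k = "(i + 2) mod 3"
  assume contra: "\<not> ?thesis"
  note idx = rotation_indices[OF i]
  have "inj_on c {0..<3}"
    using dist inj_on_of_card_Un_image[of a 3 b c] by simp
  then have "c i \<noteq> c ?j" "c i \<noteq> c ?k" "c ?j \<noteq> c ?k"
    using i idx by (auto dest: inj_onD)
  moreover have "\<not> E (c ?j) (c ?k)" "\<And>w. \<not> (E (a i) w \<and> E (b i) w \<and> E (c ?j) w \<and> E (c ?k) w)"
    using contra in_D4_sym[OF G] in_D4_in_V[OF G] by blast+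
  ultimately have "N_counterexample V E (a i) (a ?j) (a ?k) (b i) (b ?j) (b ?k) (c i) (c ?j) (c ?k)"
    using G inV ac ab i idx by unfold_locales auto
  then show False by (rule N_counterexample.contradiction)
qed

end
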